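(* Let $R$ be a finite Frobenius ring, let $\mathrm{soc}(R)$ denote its socle and $\mathrm{rad}(R)$ its Jacobson radical, and let $\psi:\mathrm{soc}(R)\to R/\mathrm{rad}(R)$ be an isomorphism of left $R$-modules. Let $\tilde{\omega}$ be the normalized homogeneous weight on the ring $R/\mathrm{rad}(R)$. Then the normalized homogeneous weight $\omega$ on $R$ is given by \[ \omega(x)=\begin{cases}\tilde{\omega}(\psi(x)), & x\in\mathrm{soc}(R),\\ 1, & x\notin \mathrm{soc}(R).\end{cases} \]
   Context: A finite ring $R$ (with identity) is Frobenius if ${}_R\mathrm{soc}({}_RR)\cong {}_R(R/\mathrm{rad}(R))$ as left $R$-modules (equivalently the right-sided version); for Frobenius rings the left and right socles coincide and are denoted $\mathrm{soc}(R)$. $R/\mathrm{rad}(R)$ is again a finite Frobenius (semisimple) ring. The normalized homogeneous weight on a finite Frobenius ring $R$ is the unique map $\omega:R\to\mathbb{R}$ with $\omega(0)=0$, $\omega(x)=\omega(y)$ whenever $Rx=Ry$, and $\sum_{y\in Rx}\omega(y)=|Rx|$ for every $x\in R\setminus\{0\}$. *)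

theory Defs
  imports "HOL-Algebra.Algebra"
begin

definition left_ideal :: "('a, 'b) ring_scheme \<Rightarrow> 'a set \<Rightarrow> bool" where
  "left_ideal R I \<longleftrightarrow> additive_subgroup I R \<and>
     (\<forall>r \<in> carrier R. \<forall>x \<in> I. r \<otimes>\<^bsub>R\<^esub> x \<in> I)"

definition maximal_left_ideal :: "('a, 'b) ring_scheme \<Rightarrow> 'a set \<Rightarrow> bool" where
  "maximal_left_ideal R I \<longleftrightarrow> left_ideal R I \<and> I \<noteq> carrier R \<and>
     (\<forall>J. left_ideal R J \<and> I \<subseteq> J \<and> J \<noteq> carrier R \<longrightarrow> J = I)"

definition minimal_left_ideal :: "('a, 'b) ring_scheme \<Rightarrow> 'a set \<Rightarrow> bool" where
  "minimal_left_ideal R I \<longleftrightarrow> left_ideal R I \<and> I \<noteq> {\<zero>\<^bsub>R\<^esub>} \<and>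
     (\<forall>J. left_ideal R J \<and> J \<subseteq> I \<and> J \<noteq> {\<zero>\<^bsub>R\<^esub>} \<longrightarrow> J = I)"

definition jrad :: "('a, 'b) ring_scheme \<Rightarrow> 'a set" where
  "jrad R = carrier R \<inter> \<Inter> {I. maximal_left_ideal R I}"

(* (left) socle: sum of all minimal left ideals, i.e. the smallest left ideal
   containing every minimal left ideal *)
definition soc :: "('a, 'b) ring_scheme \<Rightarrow> 'a set" where
  "soc R = \<Inter> {I. left_ideal R I \<and> (\<forall>M. minimal_left_ideal R M \<longrightarrow> M \<subseteq> I)}"

(* isomorphism of left R-modules  soc(R) \<rightarrow> R/rad(R), where R acts on R/rad(R)
   by r . (rad(R) + a) = (rad(R) + r)(rad(R) + a) = rad(R) + r a *)
definition soc_top_iso :: "('a, 'b) ring_scheme \<Rightarrow> ('a \<Rightarrow> 'a set) \<Rightarrow> bool" where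
  "soc_top_iso R \<psi> \<longleftrightarrow>
     bij_betw \<psi> (soc R) (carrier (R Quot jrad R)) \<and>
     (\<forall>x \<in> soc R. \<forall>y \<in> soc R.
        \<psi> (x \<oplus>\<^bsub>R\<^esub> y) = \<psi> x \<oplus>\<^bsub>R Quot jrad R\<^esub> \<psi> y) \<and>
     (\<forall>r \<in> carrier R. \<forall>x \<in> soc R.
        \<psi> (r \<otimes>\<^bsub>R\<^esub> x) = (jrad R +>\<^bsub>R\<^esub> r) \<otimes>\<^bsub>R Quot jrad R\<^esub> \<psi> x)"

definition frobenius_ring :: "('a, 'b) ring_scheme \<Rightarrow> bool" where
  "frobenius_ring R \<longleftrightarrow> ring R \<and> finite (carrier R) \<and> (\<exists>\<psi>. soc_top_iso R \<psi>)"

definition lprinc :: "('a, 'b) ring_scheme \<Rightarrow> 'a \<Rightarrow> 'a set" where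
  "lprinc S x = {r \<otimes>\<^bsub>S\<^esub> x | r. r \<in> carrier S}"

definition normalized_homogeneous_weight :: "('a, 'b) ring_scheme \<Rightarrow> ('a \<Rightarrow> real) \<Rightarrow> bool" where
  "normalized_homogeneous_weight S w \<longleftrightarrow>
     w \<zero>\<^bsub>S\<^esub> = 0 \<and>
     (\<forall>x \<in> carrier S. \<forall>y \<in> carrier S. lprinc S x = lprinc S y \<longrightarrow> w x = w y) \<and>
     (\<forall>x \<in> carrier S - {\<zero>\<^bsub>S\<^esub>}. (\<Sum>y \<in> lprinc S x. w y) = real (card (lprinc S x)))"

end

theory Submission
  imports Defs
begin

text \<open>
  Normalized homogeneous weights on a finite ring are unique: by induction on \<open>|Rx|\<close>, since all
  generators of \<open>Rx\<close> have the same weight and the others generate smaller left ideals.  So it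
  suffices to check that the function on the right-hand side is such a weight.  Splitting \<open>Rx\<close> into
  \<open>Rx \<inter> soc(R)\<close> and the rest, the rest contributes its cardinality, and \<open>Rx \<inter> soc(R)\<close> is a
  nonzero left ideal (it contains a minimal left ideal) which is principal, say \<open>Ry\<close>; \<open>\<psi>\<close> maps
  it bijectively onto the principal ideal of \<open>\<psi> y\<close> in \<open>R/rad(R)\<close>, where \<open>\<omega>'\<close> sums to the cardinality.

  Every left ideal \<open>L \<subseteq> soc(R)\<close> is principal: let \<open>A\<close> be the preimage of \<open>\<psi>(L)\<close> under \<open>R \<rightarrow> R/rad(R)\<close>.  If
  \<open>B\<close> is a left ideal of least size with \<open>1 \<in> A + B\<close>, then \<open>A \<inter> B\<close> lies in every maximal left
  ideal, so writing \<open>1 = a + b\<close> the element \<open>a \<in> A\<close> is a right unit on \<open>A\<close> modulo \<open>rad(R)\<close>, and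
  \<open>L\<close> is generated by \<open>\<psi>\<^sup>-\<^sup>1(a + rad(R))\<close>.  That \<open>rad(R)\<close> is two-sided, so that \<open>R/rad(R)\<close> is a
  ring, follows from the maximality of \<open>{y. y x \<in> M}\<close> for \<open>M\<close> maximal and \<open>x \<notin> M\<close>.
\<close>

context ring
begin

lemma r_distr_minus:
  "x \<in> carrier R \<Longrightarrow> y \<in> carrier R \<Longrightarrow> z \<in> carrier R \<Longrightarrow> x \<otimes> (y \<ominus> z) = x \<otimes> y \<ominus> x \<otimes> z"
  by (simp add: a_minus_def r_distr r_minus)

lemma l_distr_minus:
  "x \<in> carrier R \<Longrightarrow> y \<in> carrier R \<Longrightarrow> z \<in> carrier R \<Longrightarrow> (x \<ominus> y) \<otimes> z = x \<otimes> z \<ominus> y \<otimes> z"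
  by (simp add: a_minus_def l_distr l_minus)

lemma add_eq_imp_eq_minus:
  "x \<oplus> y = z \<Longrightarrow> x \<in> carrier R \<Longrightarrow> y \<in> carrier R \<Longrightarrow> y = z \<ominus> x"
  by (auto simp: a_minus_def a_comm[of x y] a_assoc r_neg)

lemma minus_add_cancel:
  "x \<in> carrier R \<Longrightarrow> y \<in> carrier R \<Longrightarrow> (x \<ominus> y) \<oplus> y = x"
  by (simp add: a_minus_def a_assoc l_neg)

lemma left_idealI:
  assumes sub: "I \<subseteq> carrier R" and zero: "\<zero> \<in> I"
    and add: "\<And>a b. a \<in> I \<Longrightarrow> b \<in> I \<Longrightarrow> a \<oplus> b \<in> I"
    and mult: "\<And>r a. r \<in> carrier R \<Longrightarrow> a \<in> I \<Longrightarrow> r \<otimes> a \<in> I"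
  shows "left_ideal R I"
proof -
  have "\<ominus> a \<in> I" if "a \<in> I" for a
    using mult[of "\<ominus> \<one>" a] that sub by (auto simp: l_minus)
  then have "subgroup I (add_monoid R)"
    using sub zero add by (intro add.subgroupI) (auto simp: a_inv_def[symmetric])
  then show ?thesis
    unfolding left_ideal_def using mult by (simp add: additive_subgroupI)
qed

lemma left_ideal_additive_subgroup: "left_ideal R I \<Longrightarrow> additive_subgroup I R"
  unfolding left_ideal_def by blast

lemma left_ideal_subset: "left_ideal R I \<Longrightarrow> I \<subseteq> carrier R"
  by (rule additive_subgroup.a_subset[OF left_ideal_additive_subgroup])

lemma left_ideal_zero: "left_ideal R I \<Longrightarrow> \<zero> \<in> I"
  by (rule additive_subgroup.zero_closed[OF left_ideal_additive_subgroup])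

lemma left_ideal_add: "left_ideal R I \<Longrightarrow> a \<in> I \<Longrightarrow> b \<in> I \<Longrightarrow> a \<oplus> b \<in> I"
  by (rule additive_subgroup.a_closed[OF left_ideal_additive_subgroup])

lemma left_ideal_minus: "left_ideal R I \<Longrightarrow> a \<in> I \<Longrightarrow> b \<in> I \<Longrightarrow> a \<ominus> b \<in> I"
  unfolding a_minus_def
  by (intro left_ideal_add additive_subgroup.a_inv_closed[OF left_ideal_additive_subgroup])

lemma left_ideal_mult: "left_ideal R I \<Longrightarrow> r \<in> carrier R \<Longrightarrow> a \<in> I \<Longrightarrow> r \<otimes> a \<in> I"
  unfolding left_ideal_def by blast

lemma left_ideal_carrier: "left_ideal R (carrier R)"
  by (rule left_idealI) auto

lemma left_ideal_Int: "left_ideal R I \<Longrightarrow> left_ideal R K \<Longrightarrow> left_ideal R (I \<inter> K)"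
  by (rule left_idealI) (auto dest: left_ideal_subset intro: left_ideal_zero left_ideal_add left_ideal_mult)

lemma left_ideal_set_add:
  assumes I: "left_ideal R I" and K: "left_ideal R K"
  shows "left_ideal R (I <+>\<^bsub>R\<^esub> K)"
  unfolding left_ideal_def
proof (intro conjI ballI)
  show "additive_subgroup (I <+>\<^bsub>R\<^esub> K) R"
    by (rule add_additive_subgroups[OF left_ideal_additive_subgroup[OF I] left_ideal_additive_subgroup[OF K]])
  fix r x assume r: "r \<in> carrier R" and "x \<in> I <+>\<^bsub>R\<^esub> K"
  then obtain a b where ab: "a \<in> I" "b \<in> K" and x: "x = a \<oplus> b"
    unfolding set_add_def' by blast
  have "r \<otimes> x = r \<otimes> a \<oplus> r \<otimes> b"
    using r ab left_ideal_subset[OF I] left_ideal_subset[OF K] by (simp add: x r_distr subsetD)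
  moreover have "r \<otimes> a \<in> I" "r \<otimes> b \<in> K"
    using r ab left_ideal_mult[OF I] left_ideal_mult[OF K] by auto
  ultimately show "r \<otimes> x \<in> I <+>\<^bsub>R\<^esub> K"
    unfolding set_add_def' by blast
qed

lemma left_ideal_lprinc:
  assumes x: "x \<in> carrier R"
  shows "left_ideal R (lprinc R x)"
proof (rule left_idealI)
  show "lprinc R x \<subseteq> carrier R" "\<zero> \<in> lprinc R x"
    using x unfolding lprinc_def by (auto intro!: exI[of _ \<zero>])
  show "a \<oplus> b \<in> lprinc R x" if "a \<in> lprinc R x" "b \<in> lprinc R x" for a b
    using that x unfolding lprinc_def by (auto simp flip: l_distr)
  show "r \<otimes> a \<in> lprinc R x" if "r \<in> carrier R" "a \<in> lprinc R x" for r a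
    using that x unfolding lprinc_def by (auto simp flip: m_assoc)
qed

lemma lprinc_self: "x \<in> carrier R \<Longrightarrow> x \<in> lprinc R x"
  unfolding lprinc_def by (auto intro!: exI[of _ \<one>])

lemma lprinc_subset: "left_ideal R I \<Longrightarrow> x \<in> I \<Longrightarrow> lprinc R x \<subseteq> I"
  unfolding lprinc_def using left_ideal_mult by blast

lemma left_ideal_Inter:
  assumes "F \<noteq> {}" and "\<And>I. I \<in> F \<Longrightarrow> left_ideal R I"
  shows "left_ideal R (\<Inter>F)"
  using assms
  by (intro left_idealI) (auto dest: left_ideal_subset intro: left_ideal_zero left_ideal_add left_ideal_mult)

lemma left_ideal_soc: "left_ideal R (soc R)"
proof -
  have "carrier R \<in> {I. left_ideal R I \<and> (\<forall>M. minimal_left_ideal R M \<longrightarrow> M \<subseteq> I)}"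
    using left_ideal_carrier by (auto simp: minimal_left_ideal_def dest: left_ideal_subset)
  then show ?thesis
    unfolding soc_def by (intro left_ideal_Inter) auto
qed

lemma minimal_left_ideal_subset_soc: "minimal_left_ideal R M \<Longrightarrow> M \<subseteq> soc R"
  unfolding soc_def by blast

lemma left_ideal_jrad: "left_ideal R (jrad R)"
proof -
  have "jrad R = \<Inter>(insert (carrier R) {I. maximal_left_ideal R I})"
    unfolding jrad_def by blast
  moreover have "left_ideal R (\<Inter>(insert (carrier R) {I. maximal_left_ideal R I}))"
    using left_ideal_carrier by (intro left_ideal_Inter) (auto simp: maximal_left_ideal_def)
  ultimately show ?thesis by simp
qed

lemma maximal_left_ideal_one_decomp:
  assumes M: "maximal_left_ideal R M" and I: "left_ideal R I" and "\<not> I \<subseteq> M"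
  shows "\<exists>a\<in>I. \<exists>m\<in>M. \<one> = a \<oplus> m"
proof -
  have LM: "left_ideal R M" using M by (simp add: maximal_left_ideal_def)
  have "I \<subseteq> I <+>\<^bsub>R\<^esub> M"
  proof
    fix x assume x: "x \<in> I"
    then have "x = x \<oplus> \<zero>" using left_ideal_subset[OF I] by auto
    then show "x \<in> I <+>\<^bsub>R\<^esub> M" using x left_ideal_zero[OF LM] unfolding set_add_def' by blast
  qed
  moreover have "M \<subseteq> I <+>\<^bsub>R\<^esub> M"
  proof
    fix y assume y: "y \<in> M"
    then have "y = \<zero> \<oplus> y" using left_ideal_subset[OF LM] by auto
    then show "y \<in> I <+>\<^bsub>R\<^esub> M" using y left_ideal_zero[OF I] unfolding set_add_def' by blast
  qed
  ultimately have "I <+>\<^bsub>R\<^esub> M = carrier R"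
    using M left_ideal_set_add[OF I LM] \<open>\<not> I \<subseteq> M\<close> unfolding maximal_left_ideal_def by blast
  then show ?thesis
    using one_closed unfolding set_add_def' by blast
qed

lemma left_ideal_image_mult_right:
  assumes K: "left_ideal R K" and r: "r \<in> carrier R"
  shows "left_ideal R ((\<lambda>a. a \<otimes> r) ` K)"
proof (rule left_idealI)
  note sK = left_ideal_subset[OF K]
  show "(\<lambda>a. a \<otimes> r) ` K \<subseteq> carrier R" "\<zero> \<in> (\<lambda>a. a \<otimes> r) ` K"
    using sK r left_ideal_zero[OF K] by (auto intro: image_eqI[of _ _ \<zero>])
  show "a \<oplus> b \<in> (\<lambda>a. a \<otimes> r) ` K" if "a \<in> (\<lambda>a. a \<otimes> r) ` K" "b \<in> (\<lambda>a. a \<otimes> r) ` K" for a b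
    using that left_ideal_add[OF K] sK r by (auto simp: l_distr[symmetric] subset_iff)
  show "s \<otimes> a \<in> (\<lambda>a. a \<otimes> r) ` K" if "s \<in> carrier R" "a \<in> (\<lambda>a. a \<otimes> r) ` K" for s a
    using that left_ideal_mult[OF K] sK r by (auto simp: m_assoc[symmetric] subset_iff)
qed

lemma maximal_left_ideal_colon:
  assumes M: "maximal_left_ideal R M" and r: "r \<in> carrier R" and "r \<notin> M"
  shows "maximal_left_ideal R {x \<in> carrier R. x \<otimes> r \<in> M}" (is "maximal_left_ideal R ?C")
proof -
  have LM: "left_ideal R M" using M by (simp add: maximal_left_ideal_def)
  have LC: "left_ideal R ?C"
  proof (rule left_idealI)
    show "\<zero> \<in> ?C" using r left_ideal_zero[OF LM] by simp
    show "a \<oplus> b \<in> ?C" if "a \<in> ?C" "b \<in> ?C" for a b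
      using that r left_ideal_add[OF LM] by (simp add: l_distr)
    show "s \<otimes> a \<in> ?C" if "s \<in> carrier R" "a \<in> ?C" for s a
      using that r left_ideal_mult[OF LM] by (simp add: m_assoc)
  qed auto
  have "\<one> \<notin> ?C"
    using r \<open>r \<notin> M\<close> by simp
  then have "?C \<noteq> carrier R" by blast
  moreover have "K = ?C" if K: "left_ideal R K" "?C \<subseteq> K" "K \<noteq> carrier R" for K
  proof (rule ccontr)
    assume "K \<noteq> ?C"
    then obtain k where k: "k \<in> K" "k \<otimes> r \<notin> M"
      using K(2) left_ideal_subset[OF K(1)] by blast
    then obtain k' m where k': "k' \<in> K" and m: "m \<in> M" and one: "\<one> = k' \<otimes> r \<oplus> m"
      using maximal_left_ideal_one_decomp[OF M left_ideal_image_mult_right[OF K(1) r]] by blast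
    have ck': "k' \<in> carrier R" and cm: "m \<in> carrier R"
      using k' m left_ideal_subset[OF K(1)] left_ideal_subset[OF LM] by auto
    have "x \<in> K" if x: "x \<in> carrier R" for x
    proof -
      define u where "u = x \<otimes> r"
      have cu: "u \<in> carrier R" using x r by (simp add: u_def)
      have "m = \<one> \<ominus> k' \<otimes> r"
        using add_eq_imp_eq_minus[OF one[symmetric]] ck' cm r by simp
      then have "(x \<ominus> u \<otimes> k') \<otimes> r = u \<otimes> m"
        using x cu ck' r by (simp add: l_distr_minus r_distr_minus m_assoc u_def)
      then have "x \<ominus> u \<otimes> k' \<in> K"
        using K(2) x cu ck' left_ideal_mult[OF LM cu m] by auto
      then have "(x \<ominus> u \<otimes> k') \<oplus> u \<otimes> k' \<in> K"
        using left_ideal_add[OF K(1)] left_ideal_mult[OF K(1) cu k'] by blast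
      then show "x \<in> K"
        using x cu ck' by (simp add: minus_add_cancel)
    qed
    then show False using K(3) left_ideal_subset[OF K(1)] by blast
  qed
  ultimately show ?thesis
    unfolding maximal_left_ideal_def using LC by blast
qed

lemma ideal_jrad: "ideal (jrad R) R"
proof (rule idealI)
  show "ring R" by (rule ring_axioms)
  show "subgroup (jrad R) (add_monoid R)"
    by (rule additive_subgroup.a_subgroup[OF left_ideal_additive_subgroup[OF left_ideal_jrad]])
  show "x \<otimes> a \<in> jrad R" if "a \<in> jrad R" "x \<in> carrier R" for a x
    using left_ideal_mult[OF left_ideal_jrad] that by blast
  show "a \<otimes> x \<in> jrad R" if a: "a \<in> jrad R" and x: "x \<in> carrier R" for a x
  proof -
    have ca: "a \<in> carrier R" using a by (simp add: jrad_def)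
    have "a \<otimes> x \<in> M" if M: "maximal_left_ideal R M" for M
    proof (cases "x \<in> M")
      case True
      then show ?thesis using M ca by (auto simp: maximal_left_ideal_def intro: left_ideal_mult)
    next
      case False
      then have "maximal_left_ideal R {y \<in> carrier R. y \<otimes> x \<in> M}"
        by (rule maximal_left_ideal_colon[OF M x])
      then show ?thesis using a unfolding jrad_def by blast
    qed
    then show ?thesis using ca x unfolding jrad_def by auto
  qed
qed

lemma exists_minimal_left_ideal_subset:
  assumes fin: "finite (carrier R)" and I: "left_ideal R I" and "I \<noteq> {\<zero>}"
  shows "\<exists>K. minimal_left_ideal R K \<and> K \<subseteq> I"
proof -
  let ?S = "{K. left_ideal R K \<and> K \<subseteq> I \<and> K \<noteq> {\<zero>}}"
  have "I \<in> ?S" using I \<open>I \<noteq> {\<zero>}\<close> by simp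
  from ex_has_least_nat[of "\<lambda>K. K \<in> ?S", OF this, of card]
  obtain K where K: "K \<in> ?S" and least: "\<forall>K'. K' \<in> ?S \<longrightarrow> card K \<le> card K'"
    by blast
  have "K \<subseteq> carrier R"
    using K left_ideal_subset[OF I] by blast
  then have "finite K"
    using fin by (rule finite_subset)
  have "J = K" if J: "left_ideal R J" "J \<subseteq> K" "J \<noteq> {\<zero>}" for J
  proof -
    have "J \<in> ?S" using J K by auto
    then have "card K \<le> card J" using least by blast
    then show "J = K" using card_seteq[OF \<open>finite K\<close> J(2)] by blast
  qed
  then have "minimal_left_ideal R K"
    using K unfolding minimal_left_ideal_def by blast
  then show ?thesis using K by blast
qed

lemma left_ideal_Int_soc_nontrivial:
  assumes fin: "finite (carrier R)" and I: "left_ideal R I" and "I \<noteq> {\<zero>}"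
  shows "I \<inter> soc R \<noteq> {\<zero>}"
proof -
  obtain K where K: "minimal_left_ideal R K" "K \<subseteq> I"
    using exists_minimal_left_ideal_subset[OF assms] by blast
  have "K \<subseteq> I \<inter> soc R"
    using K minimal_left_ideal_subset_soc by blast
  moreover have "K \<noteq> {\<zero>}"
    using K(1) unfolding minimal_left_ideal_def by blast
  moreover have "\<zero> \<in> K"
    using K(1) left_ideal_zero unfolding minimal_left_ideal_def by blast
  ultimately show ?thesis by blast
qed

lemma one_decomp_Int_maximal:
  assumes A: "left_ideal R A" and B: "left_ideal R B"
    and a: "a \<in> A" and b: "b \<in> B" and one: "\<one> = a \<oplus> b"
    and M: "maximal_left_ideal R M" and "\<not> A \<inter> B \<subseteq> M"
  shows "\<exists>a'\<in>A. \<exists>b'\<in>B \<inter> M. \<one> = a' \<oplus> b'"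
proof -
  have LM: "left_ideal R M" using M by (simp add: maximal_left_ideal_def)
  obtain c m where c: "c \<in> A \<inter> B" and m: "m \<in> M" and one': "\<one> = c \<oplus> m"
    using maximal_left_ideal_one_decomp[OF M left_ideal_Int[OF A B] \<open>\<not> A \<inter> B \<subseteq> M\<close>] by blast
  have ca: "a \<in> carrier R" and cb: "b \<in> carrier R" and cc: "c \<in> carrier R" and cm: "m \<in> carrier R"
    using a b c m left_ideal_subset[OF A] left_ideal_subset[OF B] left_ideal_subset[OF LM] by auto
  have m_eq: "m = \<one> \<ominus> c"
    using add_eq_imp_eq_minus[OF one'[symmetric] cc cm] .
  have "a \<otimes> m = a \<ominus> a \<otimes> c" "b \<otimes> m = b \<ominus> b \<otimes> c"
    using ca cb cc by (simp_all add: m_eq r_distr_minus)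
  then have am: "a \<otimes> m \<in> A" and bm: "b \<otimes> m \<in> B \<inter> M"
    using c a b ca cb left_ideal_minus[OF A] left_ideal_minus[OF B] left_ideal_mult[OF A]
      left_ideal_mult[OF B] left_ideal_mult[OF LM cb m]
    by auto
  have "(c \<oplus> a \<otimes> m) \<oplus> b \<otimes> m = c \<oplus> (a \<oplus> b) \<otimes> m"
    using ca cb cc cm by (simp add: l_distr a_assoc)
  also have "\<dots> = \<one>"
    using cm by (simp add: one'[symmetric] flip: one)
  finally have "\<one> = (c \<oplus> a \<otimes> m) \<oplus> b \<otimes> m" ..
  then show ?thesis
    using left_ideal_add[OF A _ am] c bm by blast
qed

lemma left_ideal_right_unit_mod_jrad:
  assumes fin: "finite (carrier R)" and A: "left_ideal R A"
  shows "\<exists>a\<in>A. \<forall>c\<in>A. c \<ominus> c \<otimes> a \<in> jrad R"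
proof -
  let ?S = "{B. left_ideal R B \<and> (\<exists>a\<in>A. \<exists>b\<in>B. \<one> = a \<oplus> b)}"
  have "\<one> = \<zero> \<oplus> \<one>" by simp
  then have "carrier R \<in> ?S"
    using left_ideal_carrier left_ideal_zero[OF A] one_closed by blast
  from ex_has_least_nat[of "\<lambda>B. B \<in> ?S", OF this, of card]
  obtain B where B: "left_ideal R B" and least: "\<forall>B'. B' \<in> ?S \<longrightarrow> card B \<le> card B'"
    and "\<exists>a\<in>A. \<exists>b\<in>B. \<one> = a \<oplus> b"
    by blast
  then obtain a b where a: "a \<in> A" and b: "b \<in> B" and one: "\<one> = a \<oplus> b"
    by blast
  have "A \<inter> B \<subseteq> M" if M: "maximal_left_ideal R M" for M
  proof (rule ccontr)
    assume "\<not> A \<inter> B \<subseteq> M"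
    then have "B \<inter> M \<in> ?S"
      using one_decomp_Int_maximal[OF A B a b one M] left_ideal_Int[OF B] M
      by (auto simp: maximal_left_ideal_def)
    then have "card B \<le> card (B \<inter> M)" using least by blast
    moreover have "finite B"
      using finite_subset[OF left_ideal_subset[OF B] fin] .
    ultimately have "B \<inter> M = B"
      using card_seteq[of B "B \<inter> M"] by blast
    then show False using \<open>\<not> A \<inter> B \<subseteq> M\<close> by blast
  qed
  then have AB: "A \<inter> B \<subseteq> jrad R"
    using left_ideal_subset[OF A] unfolding jrad_def by blast
  have "c \<ominus> c \<otimes> a \<in> jrad R" if c: "c \<in> A" for c
  proof -
    have ca: "a \<in> carrier R" and cb: "b \<in> carrier R" and cc: "c \<in> carrier R"
      using a b c left_ideal_subset[OF A] left_ideal_subset[OF B] by auto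
    have "c \<otimes> a \<oplus> c \<otimes> b = c"
      using ca cb cc by (simp add: r_distr[symmetric] flip: one)
    then have "c \<otimes> b = c \<ominus> c \<otimes> a"
      using ca cb cc by (intro add_eq_imp_eq_minus) auto
    moreover have "c \<otimes> b \<in> B" "c \<ominus> c \<otimes> a \<in> A"
      using left_ideal_mult[OF B cc b] left_ideal_minus[OF A c left_ideal_mult[OF A cc a]] .
    ultimately show ?thesis using AB by auto
  qed
  then show ?thesis using a by blast
qed

lemma normalized_homogeneous_weight_generators:
  assumes fin: "finite (carrier R)" and w: "normalized_homogeneous_weight R w"
    and x: "x \<in> carrier R" "x \<noteq> \<zero>"
  defines "G \<equiv> {y \<in> lprinc R x. lprinc R y = lprinc R x}"
  shows "real (card G) * w x = real (card (lprinc R x)) - (\<Sum>y \<in> lprinc R x - G. w y)"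
proof -
  have P: "lprinc R x \<subseteq> carrier R"
    using left_ideal_subset[OF left_ideal_lprinc[OF x(1)]] .
  then have "finite (lprinc R x)" using fin by (rule finite_subset)
  have "w y = w x" if "y \<in> G" for y
    using w x(1) that P unfolding normalized_homogeneous_weight_def G_def by blast
  then have "(\<Sum>y \<in> G. w y) = real (card G) * w x"
    by simp
  moreover have "(\<Sum>y \<in> lprinc R x. w y) = real (card (lprinc R x))"
    using w x unfolding normalized_homogeneous_weight_def by blast
  moreover have "(\<Sum>y \<in> lprinc R x. w y) = (\<Sum>y \<in> lprinc R x - G. w y) + (\<Sum>y \<in> G. w y)"
    using \<open>finite (lprinc R x)\<close> by (intro sum.subset_diff) (auto simp: G_def)
  ultimately show ?thesis by linarith
qed

lemma normalized_homogeneous_weight_unique: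
  assumes fin: "finite (carrier R)"
    and w1: "normalized_homogeneous_weight R w1" and w2: "normalized_homogeneous_weight R w2"
    and x: "x \<in> carrier R"
  shows "w1 x = w2 x"
  using x
proof (induction "card (lprinc R x)" arbitrary: x rule: less_induct)
  case less
  show ?case
  proof (cases "x = \<zero>")
    case True
    then show ?thesis using w1 w2 by (simp add: normalized_homogeneous_weight_def)
  next
    case False
    define G where "G = {y \<in> lprinc R x. lprinc R y = lprinc R x}"
    have "finite (lprinc R x)"
      using finite_subset[OF left_ideal_subset[OF left_ideal_lprinc[OF less.prems]] fin] .
    have "w1 y = w2 y" if y: "y \<in> lprinc R x - G" for y
    proof -
      have "lprinc R y \<subset> lprinc R x"
        using y lprinc_subset[OF left_ideal_lprinc[OF less.prems]] unfolding G_def by blast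
      then have "card (lprinc R y) < card (lprinc R x)"
        using \<open>finite (lprinc R x)\<close> psubset_card_mono by blast
      moreover have "y \<in> carrier R"
        using y left_ideal_subset[OF left_ideal_lprinc[OF less.prems]] by blast
      ultimately show ?thesis by (rule less.hyps)
    qed
    then have "real (card G) * w1 x = real (card G) * w2 x"
      using normalized_homogeneous_weight_generators[OF fin w1 less.prems False]
        normalized_homogeneous_weight_generators[OF fin w2 less.prems False]
      by (simp add: G_def)
    moreover have "card G \<noteq> 0"
      using lprinc_self[OF less.prems] \<open>finite (lprinc R x)\<close> unfolding G_def by auto
    ultimately show ?thesis by simp
  qed
qed

end

lemma (in ring_hom_ring) left_ideal_vimage:
  assumes I: "left_ideal S I"
  shows "left_ideal R {r \<in> carrier R. h r \<in> I}" (is "left_ideal R ?A")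
proof (rule R.left_idealI)
  show "\<zero> \<in> ?A"
    using S.left_ideal_zero[OF I] by simp
  show "a \<oplus> b \<in> ?A" if "a \<in> ?A" "b \<in> ?A" for a b
    using that S.left_ideal_add[OF I] by simp
  show "s \<otimes> a \<in> ?A" if "s \<in> carrier R" "a \<in> ?A" for s a
    using that S.left_ideal_mult[OF I] by simp
qed auto

locale soc_top_iso_ring = ring +
  fixes \<psi> :: "'a \<Rightarrow> 'a set"
  assumes finite_carrier: "finite (carrier R)" and soc_top_iso: "soc_top_iso R \<psi>"
begin

abbreviation Rbar where "Rbar \<equiv> R Quot jrad R"

sublocale Rbar: ring Rbar
  by (rule ideal.quotient_is_ring[OF ideal_jrad])

lemma carrier_Rbar: "carrier Rbar = (+>) (jrad R) ` carrier R"
  by (simp add: FactRing_def A_RCOSETS_def' UNION_singleton_eq_range)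

lemma psi_bij: "bij_betw \<psi> (soc R) (carrier Rbar)"
  using soc_top_iso unfolding soc_top_iso_def by blast

lemma psi_closed: "x \<in> soc R \<Longrightarrow> \<psi> x \<in> carrier Rbar"
  using bij_betw_apply[OF psi_bij] .

lemma inj_on_psi: "inj_on \<psi> (soc R)"
  using bij_betw_imp_inj_on[OF psi_bij] .

lemma psi_add: "x \<in> soc R \<Longrightarrow> y \<in> soc R \<Longrightarrow> \<psi> (x \<oplus> y) = \<psi> x \<oplus>\<^bsub>Rbar\<^esub> \<psi> y"
  using soc_top_iso unfolding soc_top_iso_def by blast

lemma psi_mult: "r \<in> carrier R \<Longrightarrow> x \<in> soc R \<Longrightarrow> \<psi> (r \<otimes> x) = (jrad R +> r) \<otimes>\<^bsub>Rbar\<^esub> \<psi> x"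
  using soc_top_iso unfolding soc_top_iso_def by blast

lemma proj_ring_hom_ring: "ring_hom_ring R Rbar ((+>) (jrad R))"
  by (rule ideal.rcos_ring_hom_ring[OF ideal_jrad])

lemma proj_mult:
  "x \<in> carrier R \<Longrightarrow> y \<in> carrier R \<Longrightarrow> jrad R +> x \<otimes> y = (jrad R +> x) \<otimes>\<^bsub>Rbar\<^esub> (jrad R +> y)"
  using ring_hom_mult[OF ideal.rcos_ring_hom[OF ideal_jrad]] .

lemma proj_zero: "jrad R +> \<zero> = \<zero>\<^bsub>Rbar\<^esub>"
  using ring_hom_zero[OF ideal.rcos_ring_hom[OF ideal_jrad] ring_axioms Rbar.ring_axioms] .

lemma psi_zero: "\<psi> \<zero> = \<zero>\<^bsub>Rbar\<^esub>"
proof -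
  have soc0: "\<zero> \<in> soc R" by (rule left_ideal_zero[OF left_ideal_soc])
  have "\<psi> \<zero> = \<psi> (\<zero> \<otimes> \<zero>)" by simp
  also have "\<dots> = \<zero>\<^bsub>Rbar\<^esub> \<otimes>\<^bsub>Rbar\<^esub> \<psi> \<zero>"
    using psi_mult[OF zero_closed soc0] by (simp add: proj_zero)
  also have "\<dots> = \<zero>\<^bsub>Rbar\<^esub>"
    using psi_closed[OF soc0] by simp
  finally show ?thesis .
qed

lemma image_psi_lprinc:
  assumes x: "x \<in> soc R"
  shows "\<psi> ` lprinc R x = lprinc Rbar (\<psi> x)"
proof -
  have "\<psi> ` lprinc R x = {(jrad R +> r) \<otimes>\<^bsub>Rbar\<^esub> \<psi> x | r. r \<in> carrier R}"
    unfolding lprinc_def using psi_mult[OF _ x] by auto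
  also have "\<dots> = lprinc Rbar (\<psi> x)"
    unfolding lprinc_def carrier_Rbar by blast
  finally show ?thesis .
qed

lemma left_ideal_image_psi:
  assumes L: "left_ideal R L" and "L \<subseteq> soc R"
  shows "left_ideal Rbar (\<psi> ` L)"
proof (rule Rbar.left_idealI)
  show "\<psi> ` L \<subseteq> carrier Rbar"
    using psi_closed \<open>L \<subseteq> soc R\<close> by blast
  show "\<zero>\<^bsub>Rbar\<^esub> \<in> \<psi> ` L"
    using left_ideal_zero[OF L] psi_zero by force
  show "p \<oplus>\<^bsub>Rbar\<^esub> q \<in> \<psi> ` L" if "p \<in> \<psi> ` L" "q \<in> \<psi> ` L" for p q
    using that psi_add left_ideal_add[OF L] \<open>L \<subseteq> soc R\<close> by (smt (verit) image_iff subsetD)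
  show "q \<otimes>\<^bsub>Rbar\<^esub> p \<in> \<psi> ` L" if "q \<in> carrier Rbar" "p \<in> \<psi> ` L" for q p
    using that psi_mult left_ideal_mult[OF L] \<open>L \<subseteq> soc R\<close> unfolding carrier_Rbar
    by (smt (verit) image_iff subsetD)
qed

lemma soc_left_ideal_principal:
  assumes L: "left_ideal R L" and Ls: "L \<subseteq> soc R"
  shows "\<exists>y\<in>L. L = lprinc R y"
proof -
  define A where "A = {r \<in> carrier R. jrad R +> r \<in> \<psi> ` L}"
  have "left_ideal R A"
    unfolding A_def using ring_hom_ring.left_ideal_vimage[OF proj_ring_hom_ring left_ideal_image_psi[OF assms]] .
  then obtain a where a: "a \<in> A" and unit: "\<forall>c\<in>A. c \<ominus> c \<otimes> a \<in> jrad R"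
    using left_ideal_right_unit_mod_jrad[OF finite_carrier] by blast
  have ca: "a \<in> carrier R" using a unfolding A_def by blast
  obtain y0 where y0: "y0 \<in> L" "jrad R +> a = \<psi> y0"
    using a unfolding A_def by blast
  have "y \<in> lprinc R y0" if y: "y \<in> L" for y
  proof -
    have "\<psi> y \<in> carrier Rbar" using psi_closed y Ls by blast
    then obtain c where c: "c \<in> carrier R" and psi_y: "\<psi> y = jrad R +> c"
      unfolding carrier_Rbar by blast
    then have "c \<in> A" using y unfolding A_def by auto
    then have "jrad R +> (c \<ominus> c \<otimes> a) = jrad R"
      using unit a_rcos_zero[OF ideal_jrad] by blast
    then have "jrad R +> c = jrad R +> (c \<otimes> a)"
      using c ca left_ideal_subset[OF left_ideal_jrad] a_coset_add_inv1[of "jrad R" c "c \<otimes> a"]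
      by (simp add: a_minus_def)
    also have "\<dots> = (jrad R +> c) \<otimes>\<^bsub>Rbar\<^esub> \<psi> y0"
      using proj_mult[OF c ca] y0(2) by simp
    also have "\<dots> = \<psi> (c \<otimes> y0)"
      using psi_mult[OF c] y0(1) Ls by blast
    finally have "\<psi> y = \<psi> (c \<otimes> y0)"
      using psi_y by simp
    moreover have "c \<otimes> y0 \<in> soc R"
      using left_ideal_mult[OF L c y0(1)] Ls by blast
    ultimately have "y = c \<otimes> y0"
      using inj_on_psi y Ls unfolding inj_on_def by blast
    then show ?thesis
      unfolding lprinc_def using c by blast
  qed
  then show ?thesis
    using y0(1) lprinc_subset[OF L y0(1)] by blast
qed

lemma sum_weight_psi:
  assumes w': "normalized_homogeneous_weight Rbar \<omega>'"
    and L: "left_ideal R L" and Ls: "L \<subseteq> soc R" and "L \<noteq> {\<zero>}"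
  shows "(\<Sum>y\<in>L. \<omega>' (\<psi> y)) = real (card L)"
proof -
  obtain y0 where y0: "y0 \<in> L" and L_eq: "L = lprinc R y0"
    using soc_left_ideal_principal[OF L Ls] by blast
  have "y0 \<noteq> \<zero>"
  proof
    assume "y0 = \<zero>"
    then have "L = {\<zero>}" using L_eq unfolding lprinc_def by force
    then show False using \<open>L \<noteq> {\<zero>}\<close> by blast
  qed
  then have "\<psi> y0 \<noteq> \<zero>\<^bsub>Rbar\<^esub>"
    using inj_on_psi y0 Ls left_ideal_zero[OF left_ideal_soc] psi_zero
    unfolding inj_on_def by blast
  then have "\<psi> y0 \<in> carrier Rbar - {\<zero>\<^bsub>Rbar\<^esub>}"
    using psi_closed y0 Ls by blast
  then have sum_top: "(\<Sum>z\<in>lprinc Rbar (\<psi> y0). \<omega>' z) = real (card (lprinc Rbar (\<psi> y0)))"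
    using w' unfolding normalized_homogeneous_weight_def by blast
  have image: "\<psi> ` L = lprinc Rbar (\<psi> y0)"
    using image_psi_lprinc y0 Ls L_eq by blast
  have inj: "inj_on \<psi> L"
    using inj_on_subset[OF inj_on_psi Ls] .
  have "(\<Sum>y\<in>L. \<omega>' (\<psi> y)) = (\<Sum>z\<in>\<psi> ` L. \<omega>' z)"
    using sum.reindex[OF inj, of \<omega>'] by simp
  also have "\<dots> = real (card (\<psi> ` L))"
    using sum_top image by simp
  also have "\<dots> = real (card L)"
    using card_image[OF inj] by simp
  finally show ?thesis .
qed

lemma normalized_homogeneous_weight_via_soc:
  assumes w': "normalized_homogeneous_weight Rbar \<omega>'"
  shows "normalized_homogeneous_weight R (\<lambda>x. if x \<in> soc R then \<omega>' (\<psi> x) else 1)"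
    (is "normalized_homogeneous_weight R ?w")
proof -
  have "?w \<zero> = 0"
    using left_ideal_zero[OF left_ideal_soc] psi_zero w'
    by (simp add: normalized_homogeneous_weight_def)
  moreover have "?w x = ?w y"
    if x: "x \<in> carrier R" and y: "y \<in> carrier R" and xy: "lprinc R x = lprinc R y" for x y
  proof -
    have "x \<in> soc R \<longleftrightarrow> y \<in> soc R"
      using lprinc_subset[OF left_ideal_soc] lprinc_self[OF x] lprinc_self[OF y] xy by blast
    moreover have "\<omega>' (\<psi> x) = \<omega>' (\<psi> y)" if "x \<in> soc R" "y \<in> soc R"
    proof -
      have "lprinc Rbar (\<psi> x) = lprinc Rbar (\<psi> y)"
        using image_psi_lprinc that xy by metis
      then show ?thesis
        using w' psi_closed that unfolding normalized_homogeneous_weight_def by blast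
    qed
    ultimately show ?thesis by simp
  qed
  moreover have "(\<Sum>y\<in>lprinc R x. ?w y) = real (card (lprinc R x))"
    if x: "x \<in> carrier R - {\<zero>}" for x
  proof -
    define P where "P = lprinc R x"
    have P: "left_ideal R P" "finite P"
      using left_ideal_lprinc finite_subset[OF left_ideal_subset finite_carrier] x
      unfolding P_def by auto
    have "P \<noteq> {\<zero>}" using lprinc_self x unfolding P_def by blast
    then have "(\<Sum>y\<in>P \<inter> soc R. \<omega>' (\<psi> y)) = real (card (P \<inter> soc R))"
      using sum_weight_psi[OF w' left_ideal_Int[OF P(1) left_ideal_soc]]
        left_ideal_Int_soc_nontrivial[OF finite_carrier P(1)] by blast
    then have "(\<Sum>y\<in>P. ?w y) = real (card (P \<inter> soc R)) + real (card (P - soc R))"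
      using sum.Int_Diff[OF P(2), of ?w "soc R"] by simp
    also have "\<dots> = real (card P)"
      using card_Int_Diff[OF P(2), of "soc R"] by simp
    finally show ?thesis unfolding P_def .
  qed
  ultimately show ?thesis
    unfolding normalized_homogeneous_weight_def by blast
qed

end

theorem theorem2p5:
  fixes R :: "('a, 'b) ring_scheme" and \<psi> :: "'a \<Rightarrow> 'a set"
    and \<omega> :: "'a \<Rightarrow> real" and \<omega>' :: "'a set \<Rightarrow> real"
  assumes "ring R" and "finite (carrier R)" and "frobenius_ring R"
    and "soc_top_iso R \<psi>"
    and "normalized_homogeneous_weight R \<omega>"
    and "normalized_homogeneous_weight (R Quot jrad R) \<omega>'"
  shows "\<forall>x \<in> carrier R. \<omega> x = (if x \<in> soc R then \<omega>' (\<psi> x) else 1)"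
proof
  fix x assume x: "x \<in> carrier R"
  interpret soc_top_iso_ring R \<psi>
    using assms by (simp add: soc_top_iso_ring_def soc_top_iso_ring_axioms_def)
  show "\<omega> x = (if x \<in> soc R then \<omega>' (\<psi> x) else 1)"
    using normalized_homogeneous_weight_unique[OF finite_carrier assms(5)
        normalized_homogeneous_weight_via_soc[OF assms(6)] x]
    by simp
qed

end
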